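(* Let $R$ be a commutative ring with identity, let $I,J$ be finitely generated ideals of $R$, and let $N$ be an injective $R$-module. If $M$ is an $(I,J)$-prime $R$-module, then $\operatorname{Hom}_R(M,N)$ is an $(I,J)$-coprime $R$-module.
   Context: All rings are commutative with identity and modules are unital. An $R$-module $M$ is $(I,J)$-prime if for all $m\in M$, $IJm=0$ implies $Im=0$ or $Jm=0$. It is $(I,J)$-coprime if $IJM=IM$ or $IJM=JM$. *)

theory Defs
  imports "HOL-Algebra.Module" "HOL-Algebra.Ideal_Product"
begin

definition module_hom ::
  "('r, 'x) ring_scheme \<Rightarrow> ('r, 'm, 'y) module_scheme \<Rightarrow> ('r, 'n, 'z) module_scheme \<Rightarrow> ('m \<Rightarrow> 'n) set"
  where "module_hom R M N =
    {f. f \<in> carrier M \<rightarrow> carrier N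
        \<and> (\<forall>x \<in> carrier M. \<forall>y \<in> carrier M. f (x \<oplus>\<^bsub>M\<^esub> y) = f x \<oplus>\<^bsub>N\<^esub> f y)
        \<and> (\<forall>a \<in> carrier R. \<forall>x \<in> carrier M. f (a \<odot>\<^bsub>M\<^esub> x) = a \<odot>\<^bsub>N\<^esub> f x)}"

text \<open>Hom_R(M,N) with pointwise operations; homomorphisms are taken extensional
  (undefined outside carrier M) so that equality of elements is equality of maps on M.
  The multiplicative fields are irrelevant for the module structure.\<close>
definition Hom_mod ::
  "('r, 'x) ring_scheme \<Rightarrow> ('r, 'm, 'y) module_scheme \<Rightarrow> ('r, 'n, 'z) module_scheme \<Rightarrow> ('r, 'm \<Rightarrow> 'n) module"
  where "Hom_mod R M N =
    \<lparr> carrier = {f \<in> module_hom R M N. f \<in> extensional (carrier M)},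
      mult = (\<lambda>f g. undefined),
      one = undefined,
      zero = (\<lambda>x \<in> carrier M. \<zero>\<^bsub>N\<^esub>),
      add = (\<lambda>f g. \<lambda>x \<in> carrier M. f x \<oplus>\<^bsub>N\<^esub> g x),
      smult = (\<lambda>a f. \<lambda>x \<in> carrier M. a \<odot>\<^bsub>N\<^esub> f x) \<rparr>"

definition ideal_smult ::
  "('r, 'x) ring_scheme \<Rightarrow> 'r set \<Rightarrow> ('r, 'm, 'y) module_scheme \<Rightarrow> 'm set"
  where "ideal_smult R I M =
    \<Inter>{H. submodule H R M \<and> {a \<odot>\<^bsub>M\<^esub> x | a x. a \<in> I \<and> x \<in> carrier M} \<subseteq> H}"

definition fin_gen_ideal :: "('r, 'x) ring_scheme \<Rightarrow> 'r set \<Rightarrow> bool"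
  where "fin_gen_ideal R I \<longleftrightarrow>
    ideal I R \<and> (\<exists>S. finite S \<and> S \<subseteq> carrier R \<and> I = genideal R S)"

definition IJ_prime ::
  "('r, 'x) ring_scheme \<Rightarrow> 'r set \<Rightarrow> 'r set \<Rightarrow> ('r, 'm, 'y) module_scheme \<Rightarrow> bool"
  where "IJ_prime R I J M \<longleftrightarrow>
    (\<forall>m \<in> carrier M.
       (\<forall>c \<in> ideal_prod R I J. c \<odot>\<^bsub>M\<^esub> m = \<zero>\<^bsub>M\<^esub>) \<longrightarrow>
       (\<forall>a \<in> I. a \<odot>\<^bsub>M\<^esub> m = \<zero>\<^bsub>M\<^esub>) \<or> (\<forall>b \<in> J. b \<odot>\<^bsub>M\<^esub> m = \<zero>\<^bsub>M\<^esub>))"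

definition IJ_coprime ::
  "('r, 'x) ring_scheme \<Rightarrow> 'r set \<Rightarrow> 'r set \<Rightarrow> ('r, 'm, 'y) module_scheme \<Rightarrow> bool"
  where "IJ_coprime R I J M \<longleftrightarrow>
    ideal_smult R (ideal_prod R I J) M = ideal_smult R I M \<or>
    ideal_smult R (ideal_prod R I J) M = ideal_smult R J M"

text \<open>HOL cannot quantify over all types, so injectivity is stated relative to all
  test modules whose carrier lives in a given type 'c: every homomorphism from a
  submodule A of B into N extends to B.\<close>
definition injective_wrt ::
  "'c itself \<Rightarrow> ('r, 'x) ring_scheme \<Rightarrow> ('r, 'n, 'z) module_scheme \<Rightarrow> bool"
  where "injective_wrt T R N \<longleftrightarrow> module R N \<and>
    (\<forall>(B :: ('r, 'c) module) A f.
        module R B \<and> submodule A R B \<and> f \<in> module_hom R (B\<lparr>carrier := A\<rparr>) N \<longrightarrow>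
        (\<exists>g \<in> module_hom R B N. \<forall>x \<in> A. g x = f x))"

end

theory Submission
  imports Defs
begin

(* For a set X of scalars let ann_M(X) be the set of elements of M killed by X.  If N is
   injective and the ideal X is generated by c_1, ..., c_n, then X Hom(M,N) consists exactly of
   the homomorphisms vanishing on ann_M(X): such an f factors through the map
   m |-> (c_1 m, ..., c_n m, 0, ...) into the sequence module M^nat, whose kernel is ann_M(X);
   injectivity of N extends the factor to some g : M^nat -> N, and then f is the sum of the
   c_i (g o e_i) with e_i the coordinate embeddings.  As IJ is again finitely generated, it
   remains to see ann_M(IJ) = ann_M(I) or ann_M(IJ) = ann_M(J).  (I,J)-primality says that
   ann_M(IJ) lies in the union of ann_M(I) and ann_M(J), and a subgroup covered by two subgroups
   lies in one of them; the reverse inclusions hold because IJ lies in I and in J. *)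

lemma (in cring) colon_ideal:
  assumes K: "ideal K R" and x: "x \<in> carrier R"
  shows "ideal {a \<in> carrier R. a \<otimes> x \<in> K} R"
proof (rule idealI[OF ring_axioms])
  interpret K: ideal K R by fact
  show "subgroup {a \<in> carrier R. a \<otimes> x \<in> K} (add_monoid R)"
    by (rule add.subgroupI) (use x in \<open>auto simp: l_distr l_minus intro!: exI[of _ \<zero>]\<close>)
  show "b \<otimes> a \<in> {a \<in> carrier R. a \<otimes> x \<in> K}" "a \<otimes> b \<in> {a \<in> carrier R. a \<otimes> x \<in> K}"
    if "a \<in> {a \<in> carrier R. a \<otimes> x \<in> K}" "b \<in> carrier R" for a b
  proof -
    have "(b \<otimes> a) \<otimes> x \<in> K" using that x K.I_l_closed by (simp add: m_assoc)
    then show "b \<otimes> a \<in> {a \<in> carrier R. a \<otimes> x \<in> K}" "a \<otimes> b \<in> {a \<in> carrier R. a \<otimes> x \<in> K}"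
      using that by (simp_all add: m_comm)
  qed
qed

lemma (in cring) genideal_prod:
  assumes S: "S \<subseteq> carrier R" and T: "T \<subseteq> carrier R"
  shows "(Idl S) \<cdot> (Idl T) = Idl (S <#> T)"
proof -
  have IS: "Idl S \<subseteq> carrier R" and IT: "Idl T \<subseteq> carrier R"
    using ideal.Icarr[OF genideal_ideal[OF S]] ideal.Icarr[OF genideal_ideal[OF T]] by blast+
  have ST: "S <#> T \<subseteq> carrier R" using S T by (rule set_mult_closed)
  have K: "ideal (Idl (S <#> T)) R" using ST by (rule genideal_ideal)
  have gen: "s \<otimes> t \<in> Idl (S <#> T)" if "s \<in> S" "t \<in> T" for s t
    using that genideal_self[OF ST] unfolding set_mult_def by blast
  have "s \<otimes> t \<in> Idl (S <#> T)" if s: "s \<in> Idl S" and t: "t \<in> Idl T" for s t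
  proof -
    have sR: "s \<in> carrier R" using s IS by blast
    have col: "Idl S \<subseteq> {a \<in> carrier R. a \<otimes> t' \<in> Idl (S <#> T)}" if "t' \<in> T" for t'
      using that S T gen by (intro genideal_minimal colon_ideal K) blast+
    have "t' \<otimes> s \<in> Idl (S <#> T)" if "t' \<in> T" for t'
    proof -
      have "s \<otimes> t' \<in> Idl (S <#> T)" using col[OF that] s by blast
      with sR that T show ?thesis by (simp add: m_comm subset_iff)
    qed
    then have "T \<subseteq> {b \<in> carrier R. b \<otimes> s \<in> Idl (S <#> T)}"
      using T by blast
    then have "Idl T \<subseteq> {b \<in> carrier R. b \<otimes> s \<in> Idl (S <#> T)}"
      by (intro genideal_minimal colon_ideal K sR)
    then show ?thesis using t sR IT by (auto simp: m_comm)
  qed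
  then have "Idl (Idl S <#> Idl T) \<subseteq> Idl (S <#> T)"
    by (intro genideal_minimal K) (auto simp: set_mult_def)
  moreover have "Idl (S <#> T) \<subseteq> Idl (Idl S <#> Idl T)"
    using set_mult_closed[OF IS IT] mono_set_mult[OF genideal_self[OF S] genideal_self[OF T]]
    by (rule subset_Idl_subset)
  ultimately show ?thesis
    using ideal_prod_eq_genideal[OF genideal_ideal[OF S] genideal_ideal[OF T]] by blast
qed

lemma fin_gen_ideal_prod:
  assumes "cring R" and "fin_gen_ideal R I" and "fin_gen_ideal R J"
  shows "fin_gen_ideal R (ideal_prod R I J)"
proof -
  interpret cring R by fact
  obtain S T where S: "finite S" "S \<subseteq> carrier R" "I = genideal R S"
    and T: "finite T" "T \<subseteq> carrier R" "J = genideal R T"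
    using assms(2,3) unfolding fin_gen_ideal_def by blast
  have "finite (set_mult R S T)" using S T by (simp add: set_mult_def)
  moreover have "set_mult R S T \<subseteq> carrier R" using S T by (intro set_mult_closed)
  moreover have "ideal_prod R I J = genideal R (set_mult R S T)"
    using S T by (simp add: genideal_prod)
  moreover have "ideal (ideal_prod R I J) R"
    using assms(2,3) unfolding fin_gen_ideal_def by (blast intro: ideal_prod_is_ideal)
  ultimately show ?thesis unfolding fin_gen_ideal_def by (intro conjI exI[of _ "set_mult R S T"])
qed

section \<open>Annihilators\<close>

definition annihilated :: "('r, 'm, 'y) module_scheme \<Rightarrow> 'r set \<Rightarrow> 'm set" where
  "annihilated M X = {m \<in> carrier M. \<forall>a \<in> X. a \<odot>\<^bsub>M\<^esub> m = \<zero>\<^bsub>M\<^esub>}"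

lemma annihilated_antimono: "X \<subseteq> Y \<Longrightarrow> annihilated M Y \<subseteq> annihilated M X"
  unfolding annihilated_def by blast

lemma annihilator_ideal:
  assumes "module R M" and m: "m \<in> carrier M"
  shows "ideal {a \<in> carrier R. a \<odot>\<^bsub>M\<^esub> m = \<zero>\<^bsub>M\<^esub>} R"
proof -
  interpret module R M by fact
  show ?thesis
  proof (rule idealI[OF ring_axioms])
    show "subgroup {a \<in> carrier R. a \<odot>\<^bsub>M\<^esub> m = \<zero>\<^bsub>M\<^esub>} (add_monoid R)"
      by (rule R.add.subgroupI) (use m in \<open>auto simp: smult_l_distr smult_l_minus intro!: exI[of _ "\<zero>\<^bsub>R\<^esub>"]\<close>)
    show "b \<otimes>\<^bsub>R\<^esub> a \<in> {a \<in> carrier R. a \<odot>\<^bsub>M\<^esub> m = \<zero>\<^bsub>M\<^esub>}" "a \<otimes>\<^bsub>R\<^esub> b \<in> {a \<in> carrier R. a \<odot>\<^bsub>M\<^esub> m = \<zero>\<^bsub>M\<^esub>}"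
      if "a \<in> {a \<in> carrier R. a \<odot>\<^bsub>M\<^esub> m = \<zero>\<^bsub>M\<^esub>}" "b \<in> carrier R" for a b
      using that m by (simp_all add: smult_assoc1 m_comm[of a b])
  qed
qed

lemma annihilated_genideal:
  assumes "module R M" and S: "S \<subseteq> carrier R"
  shows "annihilated M (genideal R S) = annihilated M S"
proof
  interpret module R M by fact
  show "annihilated M (genideal R S) \<subseteq> annihilated M S"
    by (rule annihilated_antimono[OF genideal_self[OF S]])
  show "annihilated M S \<subseteq> annihilated M (genideal R S)"
  proof
    fix m assume m: "m \<in> annihilated M S"
    then have "genideal R S \<subseteq> {a \<in> carrier R. a \<odot>\<^bsub>M\<^esub> m = \<zero>\<^bsub>M\<^esub>}"
      using S by (intro genideal_minimal annihilator_ideal[OF assms(1)]) (auto simp: annihilated_def)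
    with m show "m \<in> annihilated M (genideal R S)" by (auto simp: annihilated_def)
  qed
qed

lemma annihilated_submodule:
  assumes "module R M" and X: "X \<subseteq> carrier R"
  shows "submodule (annihilated M X) R M"
proof -
  interpret module R M by fact
  show ?thesis
  proof (rule submoduleI)
    show "a \<odot>\<^bsub>M\<^esub> m \<in> annihilated M X" if a: "a \<in> carrier R" and m: "m \<in> annihilated M X" for a m
    proof -
      have mM: "m \<in> carrier M" using m by (simp add: annihilated_def)
      have "b \<odot>\<^bsub>M\<^esub> (a \<odot>\<^bsub>M\<^esub> m) = \<zero>\<^bsub>M\<^esub>" if b: "b \<in> X" for b
      proof -
        have bR: "b \<in> carrier R" using b X by blast
        have "b \<odot>\<^bsub>M\<^esub> (a \<odot>\<^bsub>M\<^esub> m) = a \<odot>\<^bsub>M\<^esub> (b \<odot>\<^bsub>M\<^esub> m)"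
          using a bR mM by (simp add: smult_assoc1[symmetric] m_comm)
        then show ?thesis using m b a by (simp add: annihilated_def)
      qed
      with a mM show ?thesis by (simp add: annihilated_def)
    qed
  qed (use X in \<open>auto simp: annihilated_def smult_r_distr smult_r_minus\<close>)
qed

lemma (in group) subgroup_subset_Un:
  assumes H: "subgroup H G" and K: "subgroup K G" and L: "subgroup L G" and LHK: "L \<subseteq> H \<union> K"
  shows "L \<subseteq> H \<or> L \<subseteq> K"
proof (rule ccontr)
  assume "\<not> ?thesis"
  then obtain x y where x: "x \<in> L" "x \<notin> H" and y: "y \<in> L" "y \<notin> K" by blast
  with LHK have xK: "x \<in> K" and yH: "y \<in> H" by blast+
  have G: "x \<in> carrier G" "y \<in> carrier G" using x y subgroup.mem_carrier[OF L] by auto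
  have "x \<otimes> y \<in> H \<union> K" using subgroup.m_closed[OF L x(1) y(1)] LHK by blast
  then show False
  proof
    assume "x \<otimes> y \<in> H"
    then have "x \<otimes> y \<otimes> inv y \<in> H" using subgroup.m_inv_closed[OF H yH] by (rule subgroup.m_closed[OF H])
    with x G show False by (simp add: m_assoc)
  next
    assume "x \<otimes> y \<in> K"
    with subgroup.m_inv_closed[OF K xK] have "inv x \<otimes> (x \<otimes> y) \<in> K" by (rule subgroup.m_closed[OF K])
    with y G show False by (simp add: m_assoc[symmetric])
  qed
qed

lemma IJ_prime_annihilated:
  assumes "module R M" and I: "ideal I R" and J: "ideal J R" and "IJ_prime R I J M"
  shows "annihilated M (ideal_prod R I J) = annihilated M I \<or> annihilated M (ideal_prod R I J) = annihilated M J"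
proof -
  interpret module R M by fact
  have IR: "I \<subseteq> carrier R" and JR: "J \<subseteq> carrier R"
    using ideal.Icarr[OF I] ideal.Icarr[OF J] by blast+
  have IJR: "ideal_prod R I J \<subseteq> carrier R" by (rule ideal_prod_in_carrier[OF I J])
  have "annihilated M (ideal_prod R I J) \<subseteq> annihilated M I \<union> annihilated M J"
    using assms(4) unfolding IJ_prime_def annihilated_def by blast
  then have "annihilated M (ideal_prod R I J) \<subseteq> annihilated M I \<or> annihilated M (ideal_prod R I J) \<subseteq> annihilated M J"
    using annihilated_submodule[OF assms(1)] IR JR IJR
    by (intro add.subgroup_subset_Un) (auto dest: submodule.axioms(1))
  moreover have "annihilated M I \<subseteq> annihilated M (ideal_prod R I J)" "annihilated M J \<subseteq> annihilated M (ideal_prod R I J)"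
    using ideal_prod_inter[OF I J] by (auto intro!: annihilated_antimono)
  ultimately show ?thesis by blast
qed

lemma Hom_mod_simps:
  "carrier (Hom_mod R M N) = {f \<in> module_hom R M N. f \<in> extensional (carrier M)}"
  "\<zero>\<^bsub>Hom_mod R M N\<^esub> = (\<lambda>x \<in> carrier M. \<zero>\<^bsub>N\<^esub>)"
  "f \<oplus>\<^bsub>Hom_mod R M N\<^esub> g = (\<lambda>x \<in> carrier M. f x \<oplus>\<^bsub>N\<^esub> g x)"
  "a \<odot>\<^bsub>Hom_mod R M N\<^esub> f = (\<lambda>x \<in> carrier M. a \<odot>\<^bsub>N\<^esub> f x)"
  by (simp_all add: Hom_mod_def)

lemma Hom_modI:
  assumes "\<And>x. x \<in> carrier M \<Longrightarrow> f x \<in> carrier N"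
    and "\<And>x y. x \<in> carrier M \<Longrightarrow> y \<in> carrier M \<Longrightarrow> f (x \<oplus>\<^bsub>M\<^esub> y) = f x \<oplus>\<^bsub>N\<^esub> f y"
    and "\<And>a x. a \<in> carrier R \<Longrightarrow> x \<in> carrier M \<Longrightarrow> f (a \<odot>\<^bsub>M\<^esub> x) = a \<odot>\<^bsub>N\<^esub> f x"
    and "f \<in> extensional (carrier M)"
  shows "f \<in> carrier (Hom_mod R M N)"
  using assms by (auto simp: Hom_mod_simps module_hom_def)

lemma Hom_modD:
  assumes "f \<in> carrier (Hom_mod R M N)"
  shows "\<And>x. x \<in> carrier M \<Longrightarrow> f x \<in> carrier N"
    and "\<And>x y. x \<in> carrier M \<Longrightarrow> y \<in> carrier M \<Longrightarrow> f (x \<oplus>\<^bsub>M\<^esub> y) = f x \<oplus>\<^bsub>N\<^esub> f y"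
    and "\<And>a x. a \<in> carrier R \<Longrightarrow> x \<in> carrier M \<Longrightarrow> f (a \<odot>\<^bsub>M\<^esub> x) = a \<odot>\<^bsub>N\<^esub> f x"
    and "f \<in> extensional (carrier M)"
  using assms by (auto simp: Hom_mod_simps module_hom_def)

lemma Hom_mod_eqI:
  assumes "f \<in> carrier (Hom_mod R M N)" and "g \<in> carrier (Hom_mod R M N)"
    and "\<And>x. x \<in> carrier M \<Longrightarrow> f x = g x"
  shows "f = g"
  using Hom_modD(4)[OF assms(1)] Hom_modD(4)[OF assms(2)] assms(3) by (rule extensionalityI)

lemma Hom_mod_add_closed:
  assumes "module R M" and "module R N"
    and f: "f \<in> carrier (Hom_mod R M N)" and g: "g \<in> carrier (Hom_mod R M N)"
  shows "f \<oplus>\<^bsub>Hom_mod R M N\<^esub> g \<in> carrier (Hom_mod R M N)"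
proof -
  interpret M: module R M by fact
  interpret N: module R N by fact
  show ?thesis
    using Hom_modD[OF f] Hom_modD[OF g]
    by (intro Hom_modI) (simp_all add: Hom_mod_simps N.a_ac N.smult_r_distr)
qed

lemma Hom_mod_smult_closed:
  assumes "module R M" and "module R N"
    and a: "a \<in> carrier R" and f: "f \<in> carrier (Hom_mod R M N)"
  shows "a \<odot>\<^bsub>Hom_mod R M N\<^esub> f \<in> carrier (Hom_mod R M N)"
proof -
  interpret M: module R M by fact
  interpret N: module R N by fact
  show ?thesis
    using a Hom_modD[OF f]
    by (intro Hom_modI) (simp_all add: Hom_mod_simps N.smult_r_distr N.smult_assoc1[symmetric] M.m_comm)
qed

lemma Hom_mod_module:
  assumes "module R M" and "module R N"
  shows "module R (Hom_mod R M N)"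
proof -
  interpret M: module R M by fact
  interpret N: module R N by fact
  let ?H = "Hom_mod R M N"
  note add = Hom_mod_add_closed[OF assms] and smult = Hom_mod_smult_closed[OF assms]
  have zero: "\<zero>\<^bsub>?H\<^esub> \<in> carrier ?H" by (rule Hom_modI) (simp_all add: Hom_mod_simps)
  note ev = Hom_modD(1) Hom_mod_simps(2-4)
  show ?thesis
  proof (intro moduleI abelian_groupI)
    show "\<exists>g \<in> carrier ?H. g \<oplus>\<^bsub>?H\<^esub> f = \<zero>\<^bsub>?H\<^esub>" if f: "f \<in> carrier ?H" for f
    proof
      show "(\<ominus>\<^bsub>R\<^esub> \<one>\<^bsub>R\<^esub>) \<odot>\<^bsub>?H\<^esub> f \<in> carrier ?H" using f by (simp add: smult)
      then show "(\<ominus>\<^bsub>R\<^esub> \<one>\<^bsub>R\<^esub>) \<odot>\<^bsub>?H\<^esub> f \<oplus>\<^bsub>?H\<^esub> f = \<zero>\<^bsub>?H\<^esub>"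
        by (rule Hom_mod_eqI[OF add[OF _ f] zero]) (use f in \<open>simp add: ev N.smult_l_minus N.l_neg\<close>)
    qed
  qed (fact M.is_cring zero add smult | rule Hom_mod_eqI[where R = R and M = M and N = N];
      (blast intro: add smult zero)?; simp add: ev N.a_ac N.smult_l_distr N.smult_r_distr N.smult_assoc1)+
qed

lemma module_homD:
  assumes "f \<in> module_hom R M N"
  shows "\<And>x. x \<in> carrier M \<Longrightarrow> f x \<in> carrier N"
    and "\<And>x y. x \<in> carrier M \<Longrightarrow> y \<in> carrier M \<Longrightarrow> f (x \<oplus>\<^bsub>M\<^esub> y) = f x \<oplus>\<^bsub>N\<^esub> f y"
    and "\<And>a x. a \<in> carrier R \<Longrightarrow> x \<in> carrier M \<Longrightarrow> f (a \<odot>\<^bsub>M\<^esub> x) = a \<odot>\<^bsub>N\<^esub> f x"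
  using assms unfolding module_hom_def by auto

lemma module_hom_zero:
  assumes "module R M" and "module R N" and f: "f \<in> module_hom R M N"
  shows "f \<zero>\<^bsub>M\<^esub> = \<zero>\<^bsub>N\<^esub>"
proof -
  interpret M: module R M by fact
  interpret N: module R N by fact
  have f0: "f \<zero>\<^bsub>M\<^esub> \<in> carrier N" using module_homD(1)[OF f M.zero_closed] .
  have "f \<zero>\<^bsub>M\<^esub> \<oplus>\<^bsub>N\<^esub> f \<zero>\<^bsub>M\<^esub> = f \<zero>\<^bsub>M\<^esub>"
    using module_homD(2)[OF f M.zero_closed M.zero_closed] by simp
  then show ?thesis using N.add.l_cancel_one[OF f0 f0] by simp
qed

lemma module_hom_comp_in_Hom_mod:
  assumes "module R M" and "h \<in> module_hom R M B" and "g \<in> module_hom R B N"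
  shows "(\<lambda>m \<in> carrier M. g (h m)) \<in> carrier (Hom_mod R M N)"
proof -
  interpret M: module R M by fact
  show ?thesis
    using module_homD[OF assms(2)] module_homD[OF assms(3)] by (intro Hom_modI) simp_all
qed

lemma module_hom_image_submodule:
  assumes "module R M" and "module R B" and h: "h \<in> module_hom R M B"
  shows "submodule (h ` carrier M) R B"
proof -
  interpret M: module R M by fact
  interpret B: module R B by fact
  note hD = module_homD[OF h]
  show ?thesis
  proof (rule B.submoduleI)
    show "h ` carrier M \<subseteq> carrier B" using hD(1) by (rule image_subsetI)
    show "\<zero>\<^bsub>B\<^esub> \<in> h ` carrier M"
      using module_hom_zero[OF assms, symmetric] M.zero_closed by (rule image_eqI)
    show "a \<odot>\<^bsub>B\<^esub> y \<in> h ` carrier M" if a: "a \<in> carrier R" and y: "y \<in> h ` carrier M" for a y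
    proof -
      obtain m where "m \<in> carrier M" "y = h m" using y by blast
      with a show ?thesis by (auto simp flip: hD(3))
    qed
    show "y \<oplus>\<^bsub>B\<^esub> z \<in> h ` carrier M" if y: "y \<in> h ` carrier M" and z: "z \<in> h ` carrier M" for y z
    proof -
      obtain m n where "m \<in> carrier M" "n \<in> carrier M" "y = h m" "z = h n" using y z by blast
      then show ?thesis by (auto simp flip: hD(2))
    qed
    show "\<ominus>\<^bsub>B\<^esub> y \<in> h ` carrier M" if y: "y \<in> h ` carrier M" for y
    proof -
      obtain m where m: "m \<in> carrier M" "y = h m" using y by blast
      then have "\<ominus>\<^bsub>B\<^esub> y = h ((\<ominus>\<^bsub>R\<^esub> \<one>\<^bsub>R\<^esub>) \<odot>\<^bsub>M\<^esub> m)" by (simp add: hD B.smult_l_minus)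
      with m show ?thesis by simp
    qed
  qed
qed

lemma module_hom_factor_image:
  assumes "module R M" and "module R B" and "module R N"
    and h: "h \<in> module_hom R M B" and f: "f \<in> module_hom R M N"
    and ker: "\<And>m. m \<in> carrier M \<Longrightarrow> h m = \<zero>\<^bsub>B\<^esub> \<Longrightarrow> f m = \<zero>\<^bsub>N\<^esub>"
  obtains f' where "f' \<in> module_hom R (B\<lparr>carrier := h ` carrier M\<rparr>) N"
    and "\<And>m. m \<in> carrier M \<Longrightarrow> f' (h m) = f m"
proof -
  interpret M: module R M by fact
  interpret B: module R B by fact
  interpret N: module R N by fact
  note hD = module_homD[OF h] and fD = module_homD[OF f]
  have well_defined: "f m = f m'" if m: "m \<in> carrier M" and m': "m' \<in> carrier M" and eq: "h m = h m'" for m m'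
  proof -
    have d: "m \<ominus>\<^bsub>M\<^esub> m' \<in> carrier M" and dm': "(m \<ominus>\<^bsub>M\<^esub> m') \<oplus>\<^bsub>M\<^esub> m' = m"
      using m m' by (simp_all add: M.minus_eq M.a_assoc M.l_neg)
    have "h (m \<ominus>\<^bsub>M\<^esub> m') \<oplus>\<^bsub>B\<^esub> h m' = h m'"
      using hD(2)[OF d m'] dm' eq by simp
    then have "h (m \<ominus>\<^bsub>M\<^esub> m') = \<zero>\<^bsub>B\<^esub>" using hD(1)[OF d] hD(1)[OF m'] by simp
    then have "f (m \<ominus>\<^bsub>M\<^esub> m') = \<zero>\<^bsub>N\<^esub>" by (rule ker[OF d])
    then show ?thesis using fD(2)[OF d m'] dm' fD(1)[OF m'] by simp
  qed
  define f' where "f' y = f (SOME m. m \<in> carrier M \<and> h m = y)" for y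
  have f'h: "f' (h m) = f m" if m: "m \<in> carrier M" for m
  proof -
    have "\<exists>s. s \<in> carrier M \<and> h s = h m" using m by blast
    then have s: "(SOME s. s \<in> carrier M \<and> h s = h m) \<in> carrier M \<and> h (SOME s. s \<in> carrier M \<and> h s = h m) = h m"
      by (rule someI_ex)
    from well_defined[OF conjunct1[OF s] m conjunct2[OF s]] show ?thesis by (simp add: f'_def)
  qed
  have "f' (x \<oplus>\<^bsub>B\<^esub> y) = f' x \<oplus>\<^bsub>N\<^esub> f' y" if x: "x \<in> h ` carrier M" and y: "y \<in> h ` carrier M" for x y
  proof -
    obtain m n where "m \<in> carrier M" "n \<in> carrier M" "x = h m" "y = h n" using x y by blast
    then show ?thesis by (simp add: f'h fD(2) flip: hD(2))
  qed
  moreover have "f' (a \<odot>\<^bsub>B\<^esub> x) = a \<odot>\<^bsub>N\<^esub> f' x" if a: "a \<in> carrier R" and x: "x \<in> h ` carrier M" for a x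
  proof -
    obtain m where "m \<in> carrier M" "x = h m" using x by blast
    with a show ?thesis by (simp add: f'h fD(3) flip: hD(3))
  qed
  moreover have "f' \<in> h ` carrier M \<rightarrow> carrier N" using fD(1) f'h by auto
  ultimately have "f' \<in> module_hom R (B\<lparr>carrier := h ` carrier M\<rparr>) N"
    by (simp add: module_hom_def)
  then show thesis using f'h by (rule that)
qed

lemma ideal_smult_least:
  "submodule V R M \<Longrightarrow> (\<And>a x. a \<in> I \<Longrightarrow> x \<in> carrier M \<Longrightarrow> a \<odot>\<^bsub>M\<^esub> x \<in> V) \<Longrightarrow> ideal_smult R I M \<subseteq> V"
  unfolding ideal_smult_def by blast

lemma smult_in_ideal_smult: "a \<in> I \<Longrightarrow> x \<in> carrier M \<Longrightarrow> a \<odot>\<^bsub>M\<^esub> x \<in> ideal_smult R I M"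
  unfolding ideal_smult_def by blast

lemma ideal_smult_zero_closed: "\<zero>\<^bsub>M\<^esub> \<in> ideal_smult R I M"
proof (unfold ideal_smult_def, intro InterI, clarify)
  fix H assume "submodule H R M"
  from subgroup.one_closed[OF submodule.axioms(1)[OF this]] show "\<zero>\<^bsub>M\<^esub> \<in> H" by simp
qed

lemma ideal_smult_add_closed:
  assumes "x \<in> ideal_smult R I M" and "y \<in> ideal_smult R I M"
  shows "x \<oplus>\<^bsub>M\<^esub> y \<in> ideal_smult R I M"
proof (unfold ideal_smult_def, intro InterI, clarify)
  fix H assume H: "submodule H R M" "{a \<odot>\<^bsub>M\<^esub> x | a x. a \<in> I \<and> x \<in> carrier M} \<subseteq> H"
  with assms have "x \<in> H" "y \<in> H" unfolding ideal_smult_def by blast+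
  from subgroup.m_closed[OF submodule.axioms(1)[OF H(1)] this] show "x \<oplus>\<^bsub>M\<^esub> y \<in> H" by simp
qed

lemma Hom_mod_vanishing_submodule:
  assumes "module R M" and "module R N" and A: "A \<subseteq> carrier M"
  shows "submodule {f \<in> carrier (Hom_mod R M N). \<forall>m \<in> A. f m = \<zero>\<^bsub>N\<^esub>} R (Hom_mod R M N)"
proof -
  interpret N: module R N by fact
  interpret H: module R "Hom_mod R M N" by (rule Hom_mod_module[OF assms(1,2)])
  show ?thesis
  proof (rule H.submoduleI)
    show "\<ominus>\<^bsub>Hom_mod R M N\<^esub> f \<in> {f \<in> carrier (Hom_mod R M N). \<forall>m \<in> A. f m = \<zero>\<^bsub>N\<^esub>}"
      if "f \<in> {f \<in> carrier (Hom_mod R M N). \<forall>m \<in> A. f m = \<zero>\<^bsub>N\<^esub>}" for f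
    proof -
      have "\<ominus>\<^bsub>Hom_mod R M N\<^esub> f = (\<ominus>\<^bsub>R\<^esub> \<one>\<^bsub>R\<^esub>) \<odot>\<^bsub>Hom_mod R M N\<^esub> f"
        using that by (simp add: H.smult_l_minus)
      then have "\<forall>m \<in> A. (\<ominus>\<^bsub>Hom_mod R M N\<^esub> f) m = \<zero>\<^bsub>N\<^esub>"
        using that A by (auto simp: Hom_mod_simps(4))
      with that H.a_inv_closed show ?thesis by blast
    qed
  qed (use A H.zero_closed H.add.m_closed H.smult_closed in \<open>auto simp: Hom_mod_simps(2-4) subset_iff\<close>)
qed

lemma ideal_smult_Hom_subset_vanishing:
  assumes "module R M" and "module R N" and X: "X \<subseteq> carrier R"
  shows "ideal_smult R X (Hom_mod R M N) \<subseteq> {f \<in> carrier (Hom_mod R M N). \<forall>m \<in> annihilated M X. f m = \<zero>\<^bsub>N\<^esub>}"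
proof (rule ideal_smult_least[OF Hom_mod_vanishing_submodule[OF assms(1,2)]])
  show "annihilated M X \<subseteq> carrier M" by (auto simp: annihilated_def)
  fix a g assume a: "a \<in> X" and g: "g \<in> carrier (Hom_mod R M N)"
  have "(a \<odot>\<^bsub>Hom_mod R M N\<^esub> g) m = \<zero>\<^bsub>N\<^esub>" if m: "m \<in> annihilated M X" for m
  proof -
    have aR: "a \<in> carrier R" and mM: "m \<in> carrier M" using a X m by (auto simp: annihilated_def)
    have "(a \<odot>\<^bsub>Hom_mod R M N\<^esub> g) m = a \<odot>\<^bsub>N\<^esub> g m" using mM by (simp add: Hom_mod_simps(4))
    also have "\<dots> = g (a \<odot>\<^bsub>M\<^esub> m)" using Hom_modD(3)[OF g aR mM] by simp
    also have "\<dots> = g \<zero>\<^bsub>M\<^esub>" using m a by (simp add: annihilated_def)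
    also have "\<dots> = \<zero>\<^bsub>N\<^esub>" using g module_hom_zero[OF assms(1,2)] by (simp add: Hom_mod_simps)
    finally show ?thesis .
  qed
  with Hom_mod_smult_closed[OF assms(1,2) _ g] a X
  show "a \<odot>\<^bsub>Hom_mod R M N\<^esub> g \<in> {f \<in> carrier (Hom_mod R M N). \<forall>m \<in> annihilated M X. f m = \<zero>\<^bsub>N\<^esub>}"
    by blast
qed

section \<open>Injectivity of N\<close>

(* The test modules of injective_wrt in the main theorem have carrier type 'r + (nat => 'm),
   so the sequence module M^nat is placed in the right summand (only Inr-values occur). *)

definition seq_module :: "('r, 'm, 'y) module_scheme \<Rightarrow> ('r, 'r + (nat \<Rightarrow> 'm)) module" where
  "seq_module M =
    \<lparr>carrier = Inr ` {v. \<forall>i. v i \<in> carrier M}, mult = (\<lambda>x y. undefined), one = undefined,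
     zero = Inr (\<lambda>i. \<zero>\<^bsub>M\<^esub>), add = (\<lambda>x y. Inr (\<lambda>i. projr x i \<oplus>\<^bsub>M\<^esub> projr y i)),
     smult = (\<lambda>a x. Inr (\<lambda>i. a \<odot>\<^bsub>M\<^esub> projr x i))\<rparr>"

lemma seq_module_simps:
  "x \<in> carrier (seq_module M) \<longleftrightarrow> (\<exists>v. x = Inr v \<and> (\<forall>i. v i \<in> carrier M))"
  "\<zero>\<^bsub>seq_module M\<^esub> = Inr (\<lambda>i. \<zero>\<^bsub>M\<^esub>)"
  "Inr v \<oplus>\<^bsub>seq_module M\<^esub> Inr w = Inr (\<lambda>i. v i \<oplus>\<^bsub>M\<^esub> w i)"
  "a \<odot>\<^bsub>seq_module M\<^esub> Inr v = Inr (\<lambda>i. a \<odot>\<^bsub>M\<^esub> v i)"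
  by (auto simp: seq_module_def)

lemma seq_module_module:
  assumes "module R M"
  shows "module R (seq_module M)"
proof -
  interpret M: module R M by fact
  show ?thesis
  proof (intro moduleI abelian_groupI)
    show "\<exists>y \<in> carrier (seq_module M). y \<oplus>\<^bsub>seq_module M\<^esub> x = \<zero>\<^bsub>seq_module M\<^esub>"
      if x: "x \<in> carrier (seq_module M)" for x
    proof -
      obtain v where v: "x = Inr v" "\<forall>i. v i \<in> carrier M" using x by (auto simp: seq_module_simps)
      then show ?thesis
        by (intro bexI[of _ "Inr (\<lambda>i. \<ominus>\<^bsub>M\<^esub> v i)"]) (auto simp: seq_module_simps M.l_neg)
    qed
  qed (auto simp: seq_module_simps M.a_ac M.smult_l_distr M.smult_r_distr M.smult_assoc1 M.is_cring)
qed

definition smult_seq :: "('r, 'm, 'y) module_scheme \<Rightarrow> (nat \<Rightarrow> 'r) \<Rightarrow> nat \<Rightarrow> 'm \<Rightarrow> 'r + (nat \<Rightarrow> 'm)" where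
  "smult_seq M c n m = Inr (\<lambda>i. if i < n then c i \<odot>\<^bsub>M\<^esub> m else \<zero>\<^bsub>M\<^esub>)"

definition unit_seq :: "('r, 'm, 'y) module_scheme \<Rightarrow> nat \<Rightarrow> 'm \<Rightarrow> 'r + (nat \<Rightarrow> 'm)" where
  "unit_seq M k m = Inr (\<lambda>i. if i = k then m else \<zero>\<^bsub>M\<^esub>)"

lemma smult_seq_module_hom:
  assumes "module R M" and c: "\<And>i. i < n \<Longrightarrow> c i \<in> carrier R"
  shows "smult_seq M c n \<in> module_hom R M (seq_module M)"
proof -
  interpret M: module R M by fact
  show ?thesis
    using c by (auto simp: module_hom_def smult_seq_def seq_module_simps M.smult_r_distr
        M.smult_assoc1[symmetric] M.m_comm)
qed

lemma unit_seq_module_hom: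
  assumes "module R M"
  shows "unit_seq M k \<in> module_hom R M (seq_module M)"
proof -
  interpret M: module R M by fact
  show ?thesis by (auto simp: module_hom_def unit_seq_def seq_module_simps)
qed

lemma smult_seq_eq_zero_iff:
  "smult_seq M c n m = \<zero>\<^bsub>seq_module M\<^esub> \<longleftrightarrow> (\<forall>i < n. c i \<odot>\<^bsub>M\<^esub> m = \<zero>\<^bsub>M\<^esub>)"
  by (auto simp: smult_seq_def seq_module_simps fun_eq_iff)

lemma smult_seq_Suc:
  assumes "module R M" and m: "m \<in> carrier M" and c: "\<And>i. i \<le> n \<Longrightarrow> c i \<in> carrier R"
  shows "smult_seq M c (Suc n) m = smult_seq M c n m \<oplus>\<^bsub>seq_module M\<^esub> unit_seq M n (c n \<odot>\<^bsub>M\<^esub> m)"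
proof -
  interpret M: module R M by fact
  show ?thesis using m c by (auto simp: smult_seq_def unit_seq_def seq_module_simps fun_eq_iff)
qed

lemma smult_seq_comp_in_ideal_smult:
  assumes M: "module R M" and N: "module R N" and g: "g \<in> module_hom R (seq_module M) N"
    and X: "X \<subseteq> carrier R" and c: "\<And>i. i < n \<Longrightarrow> c i \<in> X"
  shows "(\<lambda>m \<in> carrier M. g (smult_seq M c n m)) \<in> ideal_smult R X (Hom_mod R M N)"
  using c
proof (induction n)
  case 0
  have "(\<lambda>m \<in> carrier M. g (smult_seq M c 0 m)) = \<zero>\<^bsub>Hom_mod R M N\<^esub>"
    using module_hom_zero[OF seq_module_module[OF M] N g]
    by (simp add: Hom_mod_simps(2) smult_seq_def seq_module_simps)
  then show ?case by (simp add: ideal_smult_zero_closed)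
next
  case (Suc n)
  let ?H = "Hom_mod R M N" and ?g = "\<lambda>m \<in> carrier M. g (unit_seq M n m)"
  have cR: "c i \<in> carrier R" if "i \<le> n" for i using Suc.prems that X by auto
  note gD = module_homD[OF g] and uD = module_homD[OF unit_seq_module_hom[OF M, of n]]
  have "c i \<in> carrier R" if "i < n" for i using cR that by simp
  note sD = module_homD[OF smult_seq_module_hom[OF M this]]
  have "g (smult_seq M c (Suc n) m) = g (smult_seq M c n m) \<oplus>\<^bsub>N\<^esub> c n \<odot>\<^bsub>N\<^esub> g (unit_seq M n m)"
    if m: "m \<in> carrier M" for m
    using m cR[of n] module.smult_closed[OF seq_module_module[OF M]]
    by (simp add: smult_seq_Suc[OF M m cR] gD sD uD)
  then have "(\<lambda>m \<in> carrier M. g (smult_seq M c (Suc n) m))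
      = (\<lambda>m \<in> carrier M. g (smult_seq M c n m)) \<oplus>\<^bsub>?H\<^esub> (c n \<odot>\<^bsub>?H\<^esub> ?g)"
    by (simp add: Hom_mod_simps(3,4) cong: restrict_cong)
  moreover have "?g \<in> carrier ?H"
    by (rule module_hom_comp_in_Hom_mod[OF M unit_seq_module_hom[OF M] g])
  moreover have "(\<lambda>m \<in> carrier M. g (smult_seq M c n m)) \<in> ideal_smult R X ?H"
    using Suc.prems by (intro Suc.IH) simp
  moreover have "c n \<in> X" using Suc.prems by simp
  ultimately show ?case by (metis ideal_smult_add_closed smult_in_ideal_smult)
qed

lemma vanishing_Hom_mod_in_ideal_smult:
  fixes R :: "('r, 'x) ring_scheme" and M :: "('r, 'm, 'y) module_scheme"
  assumes M: "module R M" and inj: "injective_wrt TYPE('r + (nat \<Rightarrow> 'm)) R N"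
    and C: "finite C" "C \<subseteq> X" and X: "X \<subseteq> carrier R"
    and f: "f \<in> carrier (Hom_mod R M N)" and van: "\<And>m. m \<in> annihilated M C \<Longrightarrow> f m = \<zero>\<^bsub>N\<^esub>"
  shows "f \<in> ideal_smult R X (Hom_mod R M N)"
proof -
  have N: "module R N" using inj by (simp add: injective_wrt_def)
  have S: "module R (seq_module M)" using M by (rule seq_module_module)
  have "\<exists>(n :: nat) c. C = c ` {i. i < n}" using C(1) by (simp add: finite_conv_nat_seg_image)
  then obtain c and n :: nat where Cc: "C = c ` {i. i < n}" by blast
  have cX: "c i \<in> X" if "i < n" for i using that Cc C(2) by blast
  then have h: "smult_seq M c n \<in> module_hom R M (seq_module M)"
    using X by (intro smult_seq_module_hom[OF M]) blast
  have "f m = \<zero>\<^bsub>N\<^esub>" if "m \<in> carrier M" "smult_seq M c n m = \<zero>\<^bsub>seq_module M\<^esub>" for m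
    using that by (intro van) (auto simp: annihilated_def Cc smult_seq_eq_zero_iff)
  then obtain f' where f': "f' \<in> module_hom R (seq_module M\<lparr>carrier := smult_seq M c n ` carrier M\<rparr>) N"
    and f'h: "\<And>m. m \<in> carrier M \<Longrightarrow> f' (smult_seq M c n m) = f m"
    using module_hom_factor_image[OF M S N h] f by (auto simp: Hom_mod_simps(1))
  have "\<exists>g \<in> module_hom R (seq_module M) N. \<forall>y \<in> smult_seq M c n ` carrier M. g y = f' y"
    using inj S module_hom_image_submodule[OF M S h] f' unfolding injective_wrt_def by blast
  then obtain g where g: "g \<in> module_hom R (seq_module M) N"
    and gf': "\<And>m. m \<in> carrier M \<Longrightarrow> g (smult_seq M c n m) = f' (smult_seq M c n m)"
    by blast
  have "f = (\<lambda>m \<in> carrier M. g (smult_seq M c n m))"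
    by (rule Hom_mod_eqI[OF f module_hom_comp_in_Hom_mod[OF M h g]]) (simp add: gf' f'h)
  with smult_seq_comp_in_ideal_smult[OF M N g X cX] show ?thesis by simp
qed

lemma ideal_smult_Hom_mod_eq_vanishing:
  fixes R :: "('r, 'x) ring_scheme" and M :: "('r, 'm, 'y) module_scheme"
  assumes M: "module R M" and inj: "injective_wrt TYPE('r + (nat \<Rightarrow> 'm)) R N"
    and X: "fin_gen_ideal R X"
  shows "ideal_smult R X (Hom_mod R M N) = {f \<in> carrier (Hom_mod R M N). \<forall>m \<in> annihilated M X. f m = \<zero>\<^bsub>N\<^esub>}"
proof
  interpret M: module R M by fact
  have N: "module R N" using inj by (simp add: injective_wrt_def)
  obtain C where C: "finite C" "C \<subseteq> carrier R" "X = genideal R C" and "ideal X R"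
    using X unfolding fin_gen_ideal_def by blast
  have XR: "X \<subseteq> carrier R" using ideal.Icarr[OF \<open>ideal X R\<close>] by blast
  show "ideal_smult R X (Hom_mod R M N) \<subseteq> {f \<in> carrier (Hom_mod R M N). \<forall>m \<in> annihilated M X. f m = \<zero>\<^bsub>N\<^esub>}"
    by (rule ideal_smult_Hom_subset_vanishing[OF M N XR])
  show "{f \<in> carrier (Hom_mod R M N). \<forall>m \<in> annihilated M X. f m = \<zero>\<^bsub>N\<^esub>} \<subseteq> ideal_smult R X (Hom_mod R M N)"
  proof
    fix f assume f: "f \<in> {f \<in> carrier (Hom_mod R M N). \<forall>m \<in> annihilated M X. f m = \<zero>\<^bsub>N\<^esub>}"
    have "C \<subseteq> X" using C M.genideal_self by blast
    moreover have "f m = \<zero>\<^bsub>N\<^esub>" if "m \<in> annihilated M C" for m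
      using f that by (simp add: C(3) annihilated_genideal[OF M C(2)])
    ultimately show "f \<in> ideal_smult R X (Hom_mod R M N)"
      using f by (intro vanishing_Hom_mod_in_ideal_smult[OF M inj C(1) _ XR]) auto
  qed
qed

theorem mainTheorem5:
  fixes R :: "'r ring"
    and M :: "('r, 'm) module"
    and N :: "('r, 'n) module"
    and I J :: "'r set"
  assumes "cring R"
    and "fin_gen_ideal R I"
    and "fin_gen_ideal R J"
    and "module R M"
    and "injective_wrt TYPE('r + (nat \<Rightarrow> 'm)) R N"
    and "IJ_prime R I J M"
  shows "IJ_coprime R I J (Hom_mod R M N)"
proof -
  have I: "ideal I R" and J: "ideal J R" using assms(2,3) unfolding fin_gen_ideal_def by blast+
  note Hom_eq = ideal_smult_Hom_mod_eq_vanishing[OF assms(4,5)]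
  have "fin_gen_ideal R (ideal_prod R I J)" using assms(1-3) by (rule fin_gen_ideal_prod)
  from Hom_eq[OF this] Hom_eq[OF assms(2)] Hom_eq[OF assms(3)] IJ_prime_annihilated[OF assms(4) I J assms(6)]
  show ?thesis unfolding IJ_coprime_def by auto
qed

end
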